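(* Let $X$ be a Banach space, $C\subset X$ a nonempty generalized polyhedral convex set, and $f(x)=\frac12\langle Mx,x\rangle+\langle q,x\rangle+\alpha$, where $M:X\to X^*$ is a bounded linear operator which is symmetric ($\langle Mx,y\rangle=\langle My,x\rangle$ for all $x,y\in X$), $q\in X^*$, $\alpha\in\mathbb R$. If $\bar x$ is a local minimum of $\min\{f(x)\mid x\in C\}$, then: (c0) $\langle M\bar x+q,v\rangle\ge0$ for all $v\in T_C(\bar x)$; (c1') for every $v\in T_C(\bar x)$ with $\langle M\bar x+q,v\rangle=0$, one has $\langle M\bar x+q,w\rangle\ge0$ for all $w\in T^2_C(\bar x,v)$; (c2') $\langle Mv,v\rangle\ge 0$ for all $v\in T_C(\bar x)$ with $\langle M\bar x+q,v\rangle=0$. *)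

theory Defs
  imports "HOL-Analysis.Analysis"
begin

definition gen_polyhedral :: "'a::real_normed_vector set \<Rightarrow> bool" where
  "gen_polyhedral C \<longleftrightarrow>
     (\<exists>L (m::nat) (xs :: nat \<Rightarrow> ('a \<Rightarrow>\<^sub>L real)) (a :: nat \<Rightarrow> real).
        affine L \<and> closed L \<and> C = {x \<in> L. \<forall>i<m. blinfun_apply (xs i) x \<le> a i})"

definition tangent_cone :: "'a::real_normed_vector set \<Rightarrow> 'a \<Rightarrow> 'a set" where
  "tangent_cone C x = {v. \<exists>(t :: nat \<Rightarrow> real) (w :: nat \<Rightarrow> 'a).
      (\<forall>k. t k > 0) \<and> t \<longlonglongrightarrow> 0 \<and> w \<longlonglongrightarrow> v \<and> (\<forall>k. x + t k *\<^sub>R w k \<in> C)}"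

definition second_order_tangent_set :: "'a::real_normed_vector set \<Rightarrow> 'a \<Rightarrow> 'a \<Rightarrow> 'a set" where
  "second_order_tangent_set C x v = {w. \<exists>(t :: nat \<Rightarrow> real) (u :: nat \<Rightarrow> 'a).
      (\<forall>k. t k > 0) \<and> t \<longlonglongrightarrow> 0 \<and> u \<longlonglongrightarrow> w \<and>
      (\<forall>k. x + t k *\<^sub>R v + ((t k)\<^sup>2 / 2) *\<^sub>R u k \<in> C)}"

end

theory Submission
  imports Defs
begin

text \<open>A generalized polyhedral convex set is, near each of its points, a cone: every tangent
direction v at x is a feasible direction, i.e. x + s v \<in> C for all small s > 0. Along such a ray
the quadratic objective is s \<mapsto> f x + s \<langle>Mx + q, v\<rangle> + (s^2/2) \<langle>Mv, v\<rangle>, so local minimality yields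
(c0) and (c2') directly. Convexity gives the first-order inequality \<langle>Mx + q, y - x\<rangle> \<ge> 0 for
all y \<in> C; applied to the points x + t v + (t^2/2) u defining a second-order tangent vector with
\<langle>Mx + q, v\<rangle> = 0 it yields (c1').\<close>

lemma tangent_cone_mono:
  assumes "C \<subseteq> D"
  shows "tangent_cone C x \<subseteq> tangent_cone D x"
  using assms unfolding tangent_cone_def by blast

lemma tangent_cone_closed_affine:
  assumes "affine L" "closed L" "x \<in> L" "v \<in> tangent_cone L x"
  shows "x + s *\<^sub>R v \<in> L"
proof -
  obtain t w where t: "\<And>k. t k > 0" and w: "w \<longlonglongrightarrow> v" and tw: "\<And>k. x + t k *\<^sub>R w k \<in> L"
    using assms(4) unfolding tangent_cone_def by blast
  have "x + s *\<^sub>R w k \<in> L" for k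
  proof -
    have "(1 - s / t k) *\<^sub>R x + (s / t k) *\<^sub>R (x + t k *\<^sub>R w k) \<in> L"
      using assms(1,3) tw unfolding affine_def by auto
    moreover have "(1 - s / t k) *\<^sub>R x + (s / t k) *\<^sub>R (x + t k *\<^sub>R w k) = x + s *\<^sub>R w k"
      using t[of k] by (simp add: algebra_simps)
    ultimately show ?thesis by simp
  qed
  moreover have "(\<lambda>k. x + s *\<^sub>R w k) \<longlonglongrightarrow> x + s *\<^sub>R v"
    using w by (intro tendsto_intros)
  ultimately show ?thesis by (rule closed_sequentially[OF assms(2)])
qed

lemma tangent_cone_halfspace:
  fixes l :: "'a::real_normed_vector \<Rightarrow>\<^sub>L real"
  assumes "l x \<le> a" "v \<in> tangent_cone {y. l y \<le> a} x"
  shows "eventually (\<lambda>s. l (x + s *\<^sub>R v) \<le> a) (at_right 0)"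
proof (cases "l x < a")
  case True
  have "((\<lambda>s. l x + s * l v) \<longlongrightarrow> l x + 0 * l v) (at_right 0)"
    by (intro tendsto_intros)
  then have "eventually (\<lambda>s. l x + s * l v < a) (at_right 0)"
    using True order_tendstoD(2) by fastforce
  then show ?thesis
    by eventually_elim (simp add: blinfun.add_right blinfun.scaleR_right)
next
  case False
  with assms(1) have active: "l x = a" by simp
  obtain t w where t: "\<And>k. t k > 0" and w: "w \<longlonglongrightarrow> v" and tw: "\<And>k. l (x + t k *\<^sub>R w k) \<le> a"
    using assms(2) unfolding tangent_cone_def by blast
  have "l (w k) \<le> 0" for k
    using tw[of k] t[of k] active
    by (simp add: blinfun.add_right blinfun.scaleR_right mult_le_0_iff)
  moreover have "(\<lambda>k. l (w k)) \<longlonglongrightarrow> l v"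
    using w by (intro tendsto_intros)
  ultimately have "l v \<le> 0"
    by (simp add: tendsto_upperbound)
  show ?thesis
    using eventually_at_right_less[of "0::real"]
  proof eventually_elim
    case (elim s)
    with \<open>l v \<le> 0\<close> show ?case
      by (simp add: active blinfun.add_right blinfun.scaleR_right mult_le_0_iff)
  qed
qed

lemma gen_polyhedral_tangent_cone_feasible:
  assumes "gen_polyhedral C" "x \<in> C" "v \<in> tangent_cone C x"
  shows "eventually (\<lambda>s. x + s *\<^sub>R v \<in> C) (at_right 0)"
proof -
  obtain L and m :: nat and xs and a :: "nat \<Rightarrow> real" where L: "affine L" "closed L"
    and C: "C = {y \<in> L. \<forall>i<m. blinfun_apply (xs i) y \<le> a i}"
    using assms(1) unfolding gen_polyhedral_def by blast
  have "C \<subseteq> L"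
    using C by blast
  then have in_L: "x + s *\<^sub>R v \<in> L" for s
    using tangent_cone_closed_affine[OF L] tangent_cone_mono assms(2,3) by (meson subsetD)
  have "eventually (\<lambda>s. \<forall>i\<in>{..<m}. xs i (x + s *\<^sub>R v) \<le> a i) (at_right 0)"
  proof (intro eventually_ball_finite ballI)
    fix i assume "i \<in> {..<m}"
    then have "C \<subseteq> {y. xs i y \<le> a i}" and active: "xs i x \<le> a i"
      using C assms(2) by auto
    then have "v \<in> tangent_cone {y. xs i y \<le> a i} x"
      using tangent_cone_mono assms(3) by blast
    with active show "eventually (\<lambda>s. xs i (x + s *\<^sub>R v) \<le> a i) (at_right 0)"
      by (rule tangent_cone_halfspace)
  qed simp
  then show ?thesis
    by (rule eventually_mono) (simp add: C in_L)
qed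

lemma gen_polyhedral_convex:
  assumes "gen_polyhedral C"
  shows "convex C"
proof -
  obtain L and m :: nat and xs and a :: "nat \<Rightarrow> real" where L: "affine L"
    and C: "C = {y \<in> L. \<forall>i<m. blinfun_apply (xs i) y \<le> a i}"
    using assms unfolding gen_polyhedral_def by blast
  have "C = L \<inter> (\<Inter>i<m. {y. xs i y \<le> a i})"
    using C by auto
  moreover have "convex {y. xs i y \<le> a i}" for i
    using convex_linear_vimage[OF bounded_linear.linear[OF blinfun.bounded_linear_right],
        OF convex_real_interval(2)[of "a i"]]
    by (simp add: vimage_def)
  ultimately show ?thesis
    using affine_imp_convex[OF L] by (auto intro!: convex_Int convex_INT)
qed

lemma convex_eventually_feasible:
  assumes "convex C" "x \<in> C" "y \<in> C"
  shows "eventually (\<lambda>s. x + s *\<^sub>R (y - x) \<in> C) (at_right 0)"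
  unfolding eventually_at_right_field
proof (intro exI[of _ 1] conjI allI impI)
  fix s :: real assume "0 < s" "s < 1"
  then have "(1 - s) *\<^sub>R x + s *\<^sub>R y \<in> C"
    using assms convexD_alt[of C x y s] by simp
  then show "x + s *\<^sub>R (y - x) \<in> C"
    by (simp add: algebra_simps)
qed simp

lemma second_order_tangent_set_nonneg:
  fixes g :: "'a::real_normed_vector \<Rightarrow>\<^sub>L real"
  assumes "\<And>y. y \<in> C \<Longrightarrow> 0 \<le> g (y - x)" "g v = 0" "w \<in> second_order_tangent_set C x v"
  shows "0 \<le> g w"
proof -
  obtain t u where t: "\<And>k. t k > 0" and u: "u \<longlonglongrightarrow> w"
    and tu: "\<And>k. x + t k *\<^sub>R v + ((t k)\<^sup>2 / 2) *\<^sub>R u k \<in> C"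
    using assms(3) unfolding second_order_tangent_set_def by blast
  have "0 \<le> g (u k)" for k
  proof -
    have "0 \<le> ((t k)\<^sup>2 / 2) * g (u k)"
      using assms(1)[OF tu[of k]] assms(2) by (simp add: blinfun.add_right blinfun.scaleR_right)
    then show ?thesis
      using t[of k] by (simp add: zero_le_mult_iff)
  qed
  moreover have "(\<lambda>k. g (u k)) \<longlonglongrightarrow> g w"
    using u by (intro tendsto_intros)
  ultimately show ?thesis
    by (simp add: tendsto_lowerbound)
qed

lemma local_min_eventually_along_ray:
  fixes f :: "'a::real_normed_vector \<Rightarrow> real"
  assumes "\<exists>\<epsilon>>0. \<forall>y\<in>C. norm (y - x) < \<epsilon> \<longrightarrow> f x \<le> f y"
    and "eventually (\<lambda>s. x + s *\<^sub>R d \<in> C) (at_right 0)"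
  shows "eventually (\<lambda>s. f x \<le> f (x + s *\<^sub>R d)) (at_right 0)"
proof -
  obtain \<epsilon> where "\<epsilon> > 0" and min: "\<And>y. y \<in> C \<Longrightarrow> norm (y - x) < \<epsilon> \<Longrightarrow> f x \<le> f y"
    using assms(1) by blast
  have "((\<lambda>s. norm (s *\<^sub>R d)) \<longlongrightarrow> norm ((0::real) *\<^sub>R d)) (at_right 0)"
    by (intro tendsto_intros)
  then have "eventually (\<lambda>s. norm (s *\<^sub>R d) < \<epsilon>) (at_right (0::real))"
    using \<open>\<epsilon> > 0\<close> order_tendstoD(2) by fastforce
  with assms(2) show ?thesis
    by eventually_elim (auto intro: min)
qed

lemma eventually_nonneg_quadratic_coeffs:
  fixes a b :: real
  assumes "eventually (\<lambda>s. 0 \<le> s * a + s\<^sup>2 * b) (at_right 0)"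
  shows "0 \<le> a" and "a = 0 \<Longrightarrow> 0 \<le> b"
proof -
  have "eventually (\<lambda>s. 0 \<le> a + s * b) (at_right 0)"
    using assms eventually_at_right_less[of "0::real"]
  proof eventually_elim
    case (elim s)
    then have "0 \<le> s * (a + s * b)"
      by (simp add: power2_eq_square algebra_simps)
    with elim show ?case
      by (simp add: zero_le_mult_iff)
  qed
  moreover have "((\<lambda>s. a + s * b) \<longlongrightarrow> a + 0 * b) (at_right 0)"
    by (intro tendsto_intros)
  ultimately show "0 \<le> a"
    using tendsto_lowerbound[of "\<lambda>s. a + s * b"] by simp
next
  assume "a = 0"
  have "eventually (\<lambda>s. 0 < s \<and> 0 \<le> s\<^sup>2 * b) (at_right (0::real))"
    using assms eventually_at_right_less[of "0::real"] by eventually_elim (simp add: \<open>a = 0\<close>)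
  then obtain s :: real where "s > 0" "0 \<le> s\<^sup>2 * b"
    using eventually_happens'[OF trivial_limit_at_right_real] by blast
  then show "0 \<le> b"
    by (simp add: zero_le_mult_iff)
qed

lemma symmetric_quadratic_along_ray:
  fixes M :: "'a::real_normed_vector \<Rightarrow> ('a \<Rightarrow>\<^sub>L real)" and q :: "'a \<Rightarrow>\<^sub>L real"
  assumes "linear M" "\<And>x y. M x y = M y x"
  shows "1/2 * M (x + s *\<^sub>R d) (x + s *\<^sub>R d) + q (x + s *\<^sub>R d)
    = 1/2 * M x x + q x + s * (M x + q) d + s\<^sup>2 * (M d d / 2)"
proof -
  have "M (x + s *\<^sub>R d) = M x + s *\<^sub>R M d"
    using assms(1) by (simp add: linear_add linear_scale)
  moreover have "M d x = M x d"
    using assms(2) by simp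
  ultimately show ?thesis
    by (simp add: blinfun.add_left blinfun.add_right blinfun.scaleR_left
        blinfun.scaleR_right power2_eq_square algebra_simps)
qed

theorem theorem3p4:
  fixes C :: "'a::banach set" and M :: "'a \<Rightarrow> ('a \<Rightarrow>\<^sub>L real)"
    and q :: "'a \<Rightarrow>\<^sub>L real" and \<alpha> :: real and xb :: 'a and f :: "'a \<Rightarrow> real"
  assumes "C \<noteq> {}" and "gen_polyhedral C"
    and "bounded_linear M"
    and "\<forall>x y. blinfun_apply (M x) y = blinfun_apply (M y) x"
    and "f = (\<lambda>x. 1/2 * blinfun_apply (M x) x + blinfun_apply q x + \<alpha>)"
    and "xb \<in> C"
    and "\<exists>\<epsilon>>0. \<forall>x\<in>C. norm (x - xb) < \<epsilon> \<longrightarrow> f xb \<le> f x"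
  shows "(\<forall>v \<in> tangent_cone C xb. blinfun_apply (M xb + q) v \<ge> 0) \<and>
         (\<forall>v \<in> tangent_cone C xb. blinfun_apply (M xb + q) v = 0 \<longrightarrow>
            (\<forall>w \<in> second_order_tangent_set C xb v. blinfun_apply (M xb + q) w \<ge> 0)) \<and>
         (\<forall>v \<in> tangent_cone C xb. blinfun_apply (M xb + q) v = 0 \<longrightarrow>
            blinfun_apply (M v) v \<ge> 0)"
proof -
  define g where "g = M xb + q"
  have ray: "0 \<le> g d" "g d = 0 \<Longrightarrow> 0 \<le> M d d / 2"
    if "eventually (\<lambda>s. xb + s *\<^sub>R d \<in> C) (at_right 0)" for d
  proof -
    have "f (xb + s *\<^sub>R d) = f xb + s * g d + s\<^sup>2 * (M d d / 2)" for s
      using symmetric_quadratic_along_ray[OF bounded_linear.linear[OF assms(3)] assms(4)[rule_format]]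
      by (simp add: assms(5) g_def)
    then have "eventually (\<lambda>s. 0 \<le> s * g d + s\<^sup>2 * (M d d / 2)) (at_right 0)"
      using local_min_eventually_along_ray[OF assms(7) that] by simp
    then show "0 \<le> g d" "g d = 0 \<Longrightarrow> 0 \<le> M d d / 2"
      by (rule eventually_nonneg_quadratic_coeffs)+
  qed
  have first_order: "0 \<le> g (y - xb)" if "y \<in> C" for y
    using ray(1) convex_eventually_feasible[OF gen_polyhedral_convex[OF assms(2)] assms(6) that] .
  have "0 \<le> g v" and "g v = 0 \<Longrightarrow> 0 \<le> M v v / 2" if "v \<in> tangent_cone C xb" for v
    using ray gen_polyhedral_tangent_cone_feasible[OF assms(2,6) that] by blast+
  with second_order_tangent_set_nonneg[OF first_order] show ?thesis
    unfolding g_def by auto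
qed

end
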